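(* Suppose $M$ is a matroid. If $\mathrm{si}(M)$ is rigid, then $M$ is rigid.
   Context: $\mathrm{si}(M)$, the simplification of $M$, is the matroid obtained from $M$ by deleting all loops and restricting to one element from each parallel class. For a matroid $N$ on a finite set $E$ of rank $d$: a valuation of $N$ is a function $\nu:\binom{E}{d}\to\mathbb{R}\cup\{\infty\}$ satisfying (V1) $\nu(B)<\infty$ for some $B$, (V2) for all $d$-sets $B,B'$ and $i\in B\setminus B'$ there is $j\in B'\setminus B$ with $\nu(B)+\nu(B')\ge\nu(B-i+j)+\nu(B'+i-j)$ (where $B-i+j:=(B\cup\{j\})\setminus\{i\}$), and such that $\{B:\nu(B)<\infty\}$ is exactly the set of bases of $N$. A valuation $\nu$ is trivial if there is $\alpha\in\mathbb{R}^E$ with $\nu(B)=\sum_{i\in B}\alpha_i$ for all bases $B$ of $N$. $N$ is rigid if all valuations of $N$ are trivial. *)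

theory Defs
  imports "HOL-Library.Extended_Real"
begin

definition matroid :: "'a set \<Rightarrow> 'a set set \<Rightarrow> bool" where
  "matroid E \<B> \<longleftrightarrow> finite E \<and> \<B> \<noteq> {} \<and> (\<forall>B\<in>\<B>. B \<subseteq> E) \<and>
     (\<forall>B1\<in>\<B>. \<forall>B2\<in>\<B>. \<forall>x\<in>B1 - B2. \<exists>y\<in>B2 - B1. insert y (B1 - {x}) \<in> \<B>)"

definition indep :: "'a set set \<Rightarrow> 'a set \<Rightarrow> bool" where
  "indep \<B> I \<longleftrightarrow> (\<exists>B\<in>\<B>. I \<subseteq> B)"

definition restrict_bases :: "'a set set \<Rightarrow> 'a set \<Rightarrow> 'a set set" where
  "restrict_bases \<B> S = {I. I \<subseteq> S \<and> indep \<B> I \<and> (\<forall>J. I \<subset> J \<and> J \<subseteq> S \<longrightarrow> \<not> indep \<B> J)}"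

definition mrank :: "'a set set \<Rightarrow> nat" where
  "mrank \<B> = card (SOME B. B \<in> \<B>)"

definition is_loop :: "'a set \<Rightarrow> 'a set set \<Rightarrow> 'a \<Rightarrow> bool" where
  "is_loop E \<B> e \<longleftrightarrow> e \<in> E \<and> \<not> indep \<B> {e}"

definition parallel :: "'a set \<Rightarrow> 'a set set \<Rightarrow> 'a \<Rightarrow> 'a \<Rightarrow> bool" where
  "parallel E \<B> e f \<longleftrightarrow> e \<in> E \<and> f \<in> E \<and> \<not> is_loop E \<B> e \<and> \<not> is_loop E \<B> f \<and>
     (e = f \<or> \<not> indep \<B> {e, f})"

text \<open>S is a set obtained by deleting all loops and keeping exactly one element
  of each parallel class; si(M) is then the restriction M|S.\<close>
definition simplification_set :: "'a set \<Rightarrow> 'a set set \<Rightarrow> 'a set \<Rightarrow> bool" where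
  "simplification_set E \<B> S \<longleftrightarrow> S \<subseteq> E \<and> (\<forall>e\<in>S. \<not> is_loop E \<B> e) \<and>
     (\<forall>e\<in>S. \<forall>f\<in>S. parallel E \<B> e f \<longrightarrow> e = f) \<and>
     (\<forall>e\<in>E. \<not> is_loop E \<B> e \<longrightarrow> (\<exists>f\<in>S. parallel E \<B> e f))"

text \<open>Valuations with values in R \<union> {\<infinity>} (ereal without -\<infinity>), defined on the d-subsets of E.\<close>
definition valuation :: "'a set \<Rightarrow> 'a set set \<Rightarrow> ('a set \<Rightarrow> ereal) \<Rightarrow> bool" where
  "valuation E \<B> \<nu> \<longleftrightarrow> (let d = mrank \<B> in
     (\<forall>B. B \<subseteq> E \<and> card B = d \<longrightarrow> \<nu> B \<noteq> -\<infinity>) \<and>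
     (\<exists>B. B \<subseteq> E \<and> card B = d \<and> \<nu> B < \<infinity>) \<and>
     (\<forall>B B'. B \<subseteq> E \<and> card B = d \<and> B' \<subseteq> E \<and> card B' = d \<longrightarrow>
        (\<forall>i\<in>B - B'. \<exists>j\<in>B' - B.
           \<nu> B + \<nu> B' \<ge> \<nu> (insert j (B - {i})) + \<nu> (insert i (B' - {j})))) \<and>
     (\<forall>B. B \<subseteq> E \<and> card B = d \<longrightarrow> (\<nu> B < \<infinity> \<longleftrightarrow> B \<in> \<B>)))"

definition trivial_valuation :: "'a set set \<Rightarrow> ('a set \<Rightarrow> ereal) \<Rightarrow> bool" where
  "trivial_valuation \<B> \<nu> \<longleftrightarrow> (\<exists>\<alpha> :: 'a \<Rightarrow> real. \<forall>B\<in>\<B>. \<nu> B = ereal (\<Sum>i\<in>B. \<alpha> i))"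

definition rigid :: "'a set \<Rightarrow> 'a set set \<Rightarrow> bool" where
  "rigid E \<B> \<longleftrightarrow> (\<forall>\<nu>. valuation E \<B> \<nu> \<longrightarrow> trivial_valuation \<B> \<nu>)"

end

theory Submission
  imports Defs
begin

text \<open>
  Let \<open>\<nu>\<close> be a valuation of \<open>M\<close> and let \<open>S\<close> pick one element from each parallel class
  of non-loops. Every base can be moved into \<open>S\<close> by replacing its elements outside \<open>S\<close> by
  their parallel representatives, so the bases of \<open>si(M) = M|S\<close> are the bases of \<open>M\<close>
  inside \<open>S\<close> and \<open>\<nu>\<close> restricts to a valuation of \<open>si(M)\<close>, which is trivial by rigidity,
  say given by \<open>\<alpha>\<close>. The exchange property forces the increment
  \<open>\<nu>(B - e + f) - \<nu>(B)\<close> for parallel \<open>e \<noteq> f\<close> to be independent of the base \<open>B \<ni> e\<close>;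
  putting \<open>\<beta>(e) = \<alpha>(f) - (that increment)\<close> for \<open>e \<notin> S\<close> with representative \<open>f\<close> shows,
  by induction on \<open>|B - S|\<close>, that \<open>\<beta>\<close> exhibits \<open>\<nu>\<close> as trivial.
\<close>

lemma card_insert_remove:
  assumes "finite B" "x \<in> B" "y \<notin> B"
  shows "card (insert y (B - {x})) = card B"
  using assms by (metis card_Suc_Diff1 card_insert_disjoint finite_Diff insert_Diff insert_iff)

locale matroid_bases =
  fixes E :: "'a set" and \<B> :: "'a set set"
  assumes matroid: "matroid E \<B>"
begin

lemma finite_ground: "finite E"
  using matroid by (simp add: matroid_def)

lemma bases_nonempty: "\<B> \<noteq> {}"
  using matroid by (simp add: matroid_def)

lemma base_subset_ground: "B \<in> \<B> \<Longrightarrow> B \<subseteq> E"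
  using matroid by (auto simp: matroid_def)

lemma finite_base: "B \<in> \<B> \<Longrightarrow> finite B"
  using base_subset_ground finite_ground finite_subset by blast

lemma base_exchange:
  "B1 \<in> \<B> \<Longrightarrow> B2 \<in> \<B> \<Longrightarrow> x \<in> B1 - B2 \<Longrightarrow> \<exists>y\<in>B2 - B1. insert y (B1 - {x}) \<in> \<B>"
  using matroid unfolding matroid_def by blast

lemma card_bases_eq:
  assumes "B1 \<in> \<B>" "B2 \<in> \<B>"
  shows "card B1 = card B2"
  using assms(1)
proof (induction "card (B1 - B2)" arbitrary: B1)
  case 0
  then have "B1 \<subseteq> B2"
    using finite_base by auto
  moreover have "B2 \<subseteq> B1"
    using base_exchange[OF assms(2) \<open>B1 \<in> \<B>\<close>] \<open>B1 \<subseteq> B2\<close> by blast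
  ultimately show ?case by simp
next
  case (Suc n)
  then obtain x where x: "x \<in> B1 - B2"
    by (metis card.empty ex_in_conv nat.distinct(1))
  then obtain y where y: "y \<in> B2 - B1" and B1': "insert y (B1 - {x}) \<in> \<B>"
    using base_exchange[OF \<open>B1 \<in> \<B>\<close> assms(2)] by blast
  have "insert y (B1 - {x}) - B2 = (B1 - B2) - {x}"
    using y by auto
  then have "card (insert y (B1 - {x}) - B2) = n"
    using Suc.hyps(2) x finite_base[OF \<open>B1 \<in> \<B>\<close>] by simp
  then have "card (insert y (B1 - {x})) = card B2"
    using Suc.hyps(1) B1' by blast
  then show ?case
    using card_insert_remove[OF finite_base[OF \<open>B1 \<in> \<B>\<close>]] x y by auto
qed

lemma card_base: "B \<in> \<B> \<Longrightarrow> card B = mrank \<B>"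
  unfolding mrank_def using card_bases_eq bases_nonempty some_in_eq by metis

lemma base_element_not_loop: "B \<in> \<B> \<Longrightarrow> e \<in> B \<Longrightarrow> \<not> is_loop E \<B> e"
  unfolding is_loop_def indep_def by blast

lemma parallel_not_in_base:
  assumes "B \<in> \<B>" "e \<in> B" "parallel E \<B> e f" "f \<noteq> e"
  shows "f \<notin> B"
  using assms unfolding parallel_def indep_def by blast

text \<open>Starting from a base containing \<open>f\<close>, exchange its elements outside \<open>B\<close> other than \<open>f\<close>
  into \<open>B\<close>; the process ends at \<open>B - e + f\<close>, since \<open>e\<close> never enters a base together with \<open>f\<close>.\<close>
lemma parallel_swap_base:
  assumes B: "B \<in> \<B>" and e: "e \<in> B" and par: "parallel E \<B> e f" and fe: "f \<noteq> e"
  shows "insert f (B - {e}) \<in> \<B>"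
proof -
  have "\<not> indep \<B> {e, f}" "indep \<B> {f}"
    using par fe unfolding parallel_def is_loop_def by auto
  then obtain B0 where B0: "B0 \<in> \<B>" "f \<in> B0" and dep: "\<And>B'. B' \<in> \<B> \<Longrightarrow> f \<in> B' \<Longrightarrow> e \<notin> B'"
    unfolding indep_def by blast
  from B0 show ?thesis
  proof (induction "card (B0 - B)" arbitrary: B0 rule: less_induct)
    case less
    show ?case
    proof (cases "B0 - B \<subseteq> {f}")
      case True
      then have "B0 \<subseteq> insert f (B - {e})"
        using dep[OF less.prems] by blast
      moreover have "card B0 = card (insert f (B - {e}))"
        using card_insert_remove card_bases_eq finite_base parallel_not_in_base
          B e par fe less.prems(1) by metis
      ultimately show ?thesis
        using less.prems(1) finite_base[OF B] by (metis card_subset_eq finite.insertI finite_Diff)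
    next
      case False
      then obtain z where z: "z \<in> B0 - B" "z \<noteq> f" by blast
      then obtain y where y: "y \<in> B - B0" and B1: "insert y (B0 - {z}) \<in> \<B>"
        using base_exchange[OF less.prems(1) B] by blast
      have "insert y (B0 - {z}) - B = (B0 - B) - {z}"
        using y by auto
      then have "card (insert y (B0 - {z}) - B) < card (B0 - B)"
        using z finite_base[OF less.prems(1)] by (metis card_Diff1_less finite_Diff)
      then show ?thesis
        using less.hyps B1 z(2) less.prems(2) by blast
    qed
  qed
qed

end

locale matroid_simplification = matroid_bases +
  fixes S :: "'a set"
  assumes simplification: "simplification_set E \<B> S"
begin

lemma simplification_subset: "S \<subseteq> E"
  using simplification by (simp add: simplification_set_def)

lemma parallel_representative:
  assumes "B \<in> \<B>" "e \<in> B"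
  shows "\<exists>f\<in>S. parallel E \<B> e f"
proof -
  have "\<forall>e\<in>E. \<not> is_loop E \<B> e \<longrightarrow> (\<exists>f\<in>S. parallel E \<B> e f)"
    using simplification by (simp add: simplification_set_def)
  then show ?thesis
    using base_subset_ground[OF assms(1)] base_element_not_loop[OF assms] assms(2) by blast
qed

lemma restrict_bases_eq: "restrict_bases \<B> S = {B \<in> \<B>. B \<subseteq> S}"
proof (intro set_eqI iffI)
  fix I assume "I \<in> restrict_bases \<B> S"
  then have IS: "I \<subseteq> S" and "indep \<B> I"
    and maximal: "\<And>J. I \<subset> J \<Longrightarrow> J \<subseteq> S \<Longrightarrow> \<not> indep \<B> J"
    unfolding restrict_bases_def by blast+
  then obtain B where B: "B \<in> \<B>" "I \<subseteq> B"
    unfolding indep_def by blast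
  have "x \<in> I" if x: "x \<in> B" for x
  proof (rule ccontr)
    assume xI: "x \<notin> I"
    obtain f where f: "f \<in> S" "parallel E \<B> x f"
      using parallel_representative[OF B(1) x] by blast
    have "\<exists>B'\<in>\<B>. insert f I \<subseteq> B'"
    proof (cases "f = x")
      case True
      then show ?thesis using B x by blast
    next
      case False
      have "insert f I \<subseteq> insert f (B - {x})"
        using B(2) xI by blast
      then show ?thesis
        using parallel_swap_base[OF B(1) x f(2) False] by blast
    qed
    moreover have "f \<notin> I"
      using xI B(2) parallel_not_in_base[OF B(1) x f(2)] by blast
    ultimately show False
      using maximal[of "insert f I"] IS f(1) unfolding indep_def by blast
  qed
  then have "I = B"
    using B(2) by blast
  then show "I \<in> {B \<in> \<B>. B \<subseteq> S}"
    using B(1) IS by blast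
next
  fix I assume I: "I \<in> {B \<in> \<B>. B \<subseteq> S}"
  have "\<not> indep \<B> J" if "I \<subset> J" for J
  proof
    assume "indep \<B> J"
    then obtain B where B: "B \<in> \<B>" "J \<subseteq> B"
      unfolding indep_def by blast
    then have "finite J"
      using finite_base finite_subset by blast
    then have "card I < card J"
      using \<open>I \<subset> J\<close> by (rule psubset_card_mono)
    also have "\<dots> \<le> card B"
      using B finite_base by (simp add: card_mono)
    finally show False
      using card_bases_eq[OF B(1), of I] I by simp
  qed
  moreover have "indep \<B> I"
    using I unfolding indep_def by blast
  ultimately show "I \<in> restrict_bases \<B> S"
    using I unfolding restrict_bases_def by blast
qed

lemma base_inside_simplification: "\<exists>B\<in>\<B>. B \<subseteq> S"
proof -
  obtain B where "B \<in> \<B>"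
    using bases_nonempty by blast
  then show ?thesis
  proof (induction "card (B - S)" arbitrary: B)
    case 0
    then have "B - S = {}"
      using finite_base by (metis card_0_eq finite_Diff)
    then show ?case
      using 0 by blast
  next
    case (Suc n)
    then obtain e where e: "e \<in> B" "e \<notin> S"
      by (metis DiffE card.empty ex_in_conv nat.distinct(1))
    then obtain f where f: "f \<in> S" "parallel E \<B> e f" "f \<noteq> e"
      using parallel_representative[OF Suc.prems] by blast
    have "insert f (B - {e}) - S = (B - S) - {e}"
      using f(1) by blast
    then have "card (insert f (B - {e}) - S) = n"
      using Suc.hyps(2) e finite_base[OF Suc.prems] by simp
    then show ?case
      using Suc.hyps(1) parallel_swap_base[OF Suc.prems e(1) f(2,3)] by blast
  qed
qed

lemma mrank_restrict: "mrank (restrict_bases \<B> S) = mrank \<B>"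
proof -
  obtain B0 where "B0 \<in> restrict_bases \<B> S"
    using base_inside_simplification unfolding restrict_bases_eq by blast
  then have "(SOME B. B \<in> restrict_bases \<B> S) \<in> restrict_bases \<B> S"
    by (rule someI)
  then have "(SOME B. B \<in> restrict_bases \<B> S) \<in> \<B>"
    unfolding restrict_bases_eq by blast
  then show ?thesis
    unfolding mrank_def[of "restrict_bases \<B> S"] by (rule card_base)
qed

end

locale valuated_matroid = matroid_bases +
  fixes \<nu> :: "'a set \<Rightarrow> ereal"
  assumes valuation: "valuation E \<B> \<nu>"
begin

lemma valuation_not_minf: "B \<subseteq> E \<Longrightarrow> card B = mrank \<B> \<Longrightarrow> \<nu> B \<noteq> -\<infinity>"
  using valuation[unfolded valuation_def Let_def] by (elim conjE allE impE) auto

lemma valuation_finite_iff: "B \<subseteq> E \<Longrightarrow> card B = mrank \<B> \<Longrightarrow> \<nu> B < \<infinity> \<longleftrightarrow> B \<in> \<B>"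
  using valuation[unfolded valuation_def Let_def] by (elim conjE) (drule spec[of _ B], auto)

lemma valuation_exchange:
  "B \<subseteq> E \<Longrightarrow> card B = mrank \<B> \<Longrightarrow> B' \<subseteq> E \<Longrightarrow> card B' = mrank \<B> \<Longrightarrow> i \<in> B - B' \<Longrightarrow>
    \<exists>j\<in>B' - B. \<nu> (insert j (B - {i})) + \<nu> (insert i (B' - {j})) \<le> \<nu> B + \<nu> B'"
  using valuation[unfolded valuation_def Let_def] by (elim conjE) (drule spec[of _ B], drule spec[of _ B'], auto)

lemma valuation_base_ereal:
  assumes "B \<in> \<B>"
  obtains r where "\<nu> B = ereal r"
proof -
  have "\<nu> B < \<infinity>"
    using valuation_finite_iff[OF base_subset_ground[OF assms] card_base[OF assms]] assms ..
  moreover have "\<nu> B \<noteq> -\<infinity>"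
    using valuation_not_minf[OF base_subset_ground[OF assms] card_base[OF assms]] .
  ultimately show ?thesis
    using that by (cases "\<nu> B") simp_all
qed

text \<open>Both exchanged sets are bases: their values sum to a finite number and none is \<open>-\<infinity>\<close>.\<close>
lemma valuation_strong_exchange:
  assumes B1: "B1 \<in> \<B>" and B2: "B2 \<in> \<B>" and i: "i \<in> B1 - B2"
  shows "\<exists>j\<in>B2 - B1. insert j (B1 - {i}) \<in> \<B> \<and> insert i (B2 - {j}) \<in> \<B> \<and>
    \<nu> (insert j (B1 - {i})) + \<nu> (insert i (B2 - {j})) \<le> \<nu> B1 + \<nu> B2"
proof -
  obtain j where j: "j \<in> B2 - B1"
    and le: "\<nu> (insert j (B1 - {i})) + \<nu> (insert i (B2 - {j})) \<le> \<nu> B1 + \<nu> B2"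
    using valuation_exchange[OF base_subset_ground[OF B1] card_base[OF B1]
        base_subset_ground[OF B2] card_base[OF B2] i] by blast
  define C1 C2 where "C1 = insert j (B1 - {i})" and "C2 = insert i (B2 - {j})"
  have C1E: "C1 \<subseteq> E" and C2E: "C2 \<subseteq> E"
    unfolding C1_def C2_def using base_subset_ground[OF B1] base_subset_ground[OF B2] i j by blast+
  have "card C1 = card B1" "card C2 = card B2"
    unfolding C1_def C2_def using i j
    by (auto intro: card_insert_remove[OF finite_base[OF B1]] card_insert_remove[OF finite_base[OF B2]])
  then have C1card: "card C1 = mrank \<B>" and C2card: "card C2 = mrank \<B>"
    using card_base[OF B1] card_base[OF B2] by simp_all
  obtain r1 r2 where "\<nu> B1 = ereal r1" "\<nu> B2 = ereal r2"
    using valuation_base_ereal[OF B1] valuation_base_ereal[OF B2] by metis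
  then have "\<nu> B1 + \<nu> B2 < \<infinity>"
    by simp
  with le have "\<nu> C1 + \<nu> C2 < \<infinity>"
    unfolding C1_def C2_def by (rule le_less_trans)
  moreover have "\<nu> C1 \<noteq> -\<infinity>" "\<nu> C2 \<noteq> -\<infinity>"
    using valuation_not_minf[OF C1E C1card] valuation_not_minf[OF C2E C2card] .
  ultimately have "\<nu> C1 < \<infinity>" "\<nu> C2 < \<infinity>"
    by (cases "\<nu> C1"; cases "\<nu> C2"; simp)+
  then have "C1 \<in> \<B>" "C2 \<in> \<B>"
    using valuation_finite_iff[OF C1E C1card] valuation_finite_iff[OF C2E C2card] by simp_all
  then show ?thesis
    using j le unfolding C1_def C2_def by blast
qed

text \<open>Exchanging \<open>e\<close> between \<open>B1\<close> and \<open>B2 - e + f\<close>, the element returned must be \<open>f\<close>,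
  because \<open>e\<close> and \<open>f\<close> never lie in a common base.\<close>
lemma parallel_swap_le:
  assumes B1: "B1 \<in> \<B>" and B2: "B2 \<in> \<B>" and e: "e \<in> B1" "e \<in> B2"
    and par: "parallel E \<B> e f" and fe: "f \<noteq> e"
  shows "\<nu> (insert f (B1 - {e})) + \<nu> B2 \<le> \<nu> B1 + \<nu> (insert f (B2 - {e}))"
proof -
  define B2' where "B2' = insert f (B2 - {e})"
  have "B2' \<in> \<B>"
    unfolding B2'_def using parallel_swap_base[OF B2 e(2) par fe] .
  moreover have "e \<in> B1 - B2'"
    unfolding B2'_def using e(1) fe by blast
  ultimately obtain j where j: "j \<in> B2' - B1" "insert e (B2' - {j}) \<in> \<B>"
    and le: "\<nu> (insert j (B1 - {e})) + \<nu> (insert e (B2' - {j})) \<le> \<nu> B1 + \<nu> B2'"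
    using valuation_strong_exchange[OF B1] by blast
  have "f \<notin> insert e (B2' - {j})"
    using parallel_not_in_base[OF j(2) _ par fe] by blast
  then have "j = f"
    unfolding B2'_def by blast
  moreover have "insert e (B2' - {f}) = B2"
    unfolding B2'_def using parallel_not_in_base[OF B2 e(2) par fe] e(2) by blast
  ultimately show ?thesis
    using le unfolding B2'_def by (simp add: add.commute)
qed

lemma parallel_swap_increment_eq:
  assumes B1: "B1 \<in> \<B>" and B2: "B2 \<in> \<B>" and e: "e \<in> B1" "e \<in> B2"
    and par: "parallel E \<B> e f" and fe: "f \<noteq> e"
  shows "real_of_ereal (\<nu> (insert f (B1 - {e}))) - real_of_ereal (\<nu> B1)
       = real_of_ereal (\<nu> (insert f (B2 - {e}))) - real_of_ereal (\<nu> B2)"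
proof -
  obtain a1 a2 b1 b2 where
    "\<nu> B1 = ereal a1" "\<nu> B2 = ereal a2"
    "\<nu> (insert f (B1 - {e})) = ereal b1" "\<nu> (insert f (B2 - {e})) = ereal b2"
    using valuation_base_ereal[OF B1] valuation_base_ereal[OF B2]
      valuation_base_ereal[OF parallel_swap_base[OF B1 e(1) par fe]]
      valuation_base_ereal[OF parallel_swap_base[OF B2 e(2) par fe]] by metis
  then show ?thesis
    using parallel_swap_le[OF B1 B2 e par fe] parallel_swap_le[OF B2 B1 e(2,1) par fe] by simp
qed

end

locale valuated_simplification = matroid_simplification + valuated_matroid
begin

lemma valuation_restrict: "valuation S (restrict_bases \<B> S) \<nu>"
  unfolding valuation_def Let_def mrank_restrict
  unfolding restrict_bases_eq
proof (intro conjI allI impI ballI)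
  obtain B0 where "B0 \<in> \<B>" "B0 \<subseteq> S"
    using base_inside_simplification by blast
  moreover have "\<nu> B0 < \<infinity>"
    using valuation_finite_iff[OF base_subset_ground card_base] \<open>B0 \<in> \<B>\<close> by blast
  ultimately show "\<exists>B. B \<subseteq> S \<and> card B = mrank \<B> \<and> \<nu> B < \<infinity>"
    using card_base by blast
next
  fix B
  assume "B \<subseteq> S \<and> card B = mrank \<B>"
  then show "\<nu> B \<noteq> -\<infinity>"
    using valuation_not_minf simplification_subset by blast
next
  fix B
  assume "B \<subseteq> S \<and> card B = mrank \<B>"
  then show "\<nu> B < \<infinity> \<longleftrightarrow> B \<in> {B \<in> \<B>. B \<subseteq> S}"
    using valuation_finite_iff[of B] simplification_subset by auto
next
  fix B B' i
  assume "B \<subseteq> S \<and> card B = mrank \<B> \<and> B' \<subseteq> S \<and> card B' = mrank \<B>" and i: "i \<in> B - B'"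
  then show "\<exists>j\<in>B' - B. \<nu> (insert j (B - {i})) + \<nu> (insert i (B' - {j})) \<le> \<nu> B + \<nu> B'"
    using valuation_exchange[of B B' i] simplification_subset by auto
qed

lemma trivial_valuation_extend:
  assumes "trivial_valuation (restrict_bases \<B> S) \<nu>"
  shows "trivial_valuation \<B> \<nu>"
proof -
  obtain \<alpha> where \<alpha>: "\<And>B. B \<in> \<B> \<Longrightarrow> B \<subseteq> S \<Longrightarrow> \<nu> B = ereal (sum \<alpha> B)"
    using assms unfolding trivial_valuation_def restrict_bases_eq by blast
  define rep where "rep e = (SOME f. f \<in> S \<and> parallel E \<B> e f)" for e
  define base where "base e = (SOME B. B \<in> \<B> \<and> e \<in> B)" for e
  \<comment> \<open>by \<open>parallel_swap_increment_eq\<close> the increment does not depend on the chosen base\<close>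
  define incr where
    "incr e = real_of_ereal (\<nu> (insert (rep e) (base e - {e}))) - real_of_ereal (\<nu> (base e))" for e
  define \<beta> where "\<beta> e = (if e \<in> S then \<alpha> e else \<alpha> (rep e) - incr e)" for e
  have rep: "rep e \<in> S \<and> parallel E \<B> e (rep e)" if "B \<in> \<B>" "e \<in> B" for B e
    using parallel_representative[OF that] unfolding rep_def by (metis (mono_tags, lifting) someI)
  have base: "base e \<in> \<B> \<and> e \<in> base e" if "B \<in> \<B>" "e \<in> B" for B e
    using that unfolding base_def by (metis (mono_tags, lifting) someI)
  have "\<nu> B = ereal (sum \<beta> B)" if "B \<in> \<B>" for B
    using that
  proof (induction "card (B - S)" arbitrary: B)
    case 0
    then have "B - S = {}"
      using finite_base by (metis card_0_eq finite_Diff)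
    then have "sum \<beta> B = sum \<alpha> B"
      unfolding \<beta>_def by (intro sum.cong) auto
    then show ?case
      using \<alpha>[OF \<open>B \<in> \<B>\<close>] \<open>B - S = {}\<close> by simp
  next
    case (Suc n)
    then obtain e where e: "e \<in> B" "e \<notin> S"
      by (metis DiffE card.empty ex_in_conv nat.distinct(1))
    define f where "f = rep e"
    have f: "f \<in> S" "parallel E \<B> e f" "f \<noteq> e"
      unfolding f_def using rep[OF Suc.prems e(1)] e(2) by auto
    define B' where "B' = insert f (B - {e})"
    have B': "B' \<in> \<B>" "f \<notin> B"
      unfolding B'_def using parallel_swap_base[OF Suc.prems e(1) f(2,3)]
        parallel_not_in_base[OF Suc.prems e(1) f(2,3)] by blast+
    have "B' - S = (B - S) - {e}"
      using f(1) unfolding B'_def by blast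
    then have "card (B' - S) = n"
      using Suc.hyps(2) e finite_base[OF Suc.prems] by simp
    then have IH: "\<nu> B' = ereal (sum \<beta> B')"
      using Suc.hyps(1) B'(1) by blast
    have "sum \<beta> B' = \<alpha> f + sum \<beta> (B - {e})"
      unfolding B'_def using finite_base[OF Suc.prems] B'(2) f(1) by (simp add: \<beta>_def)
    also have "\<dots> = sum \<beta> B + incr e"
      using finite_base[OF Suc.prems] e by (simp add: sum.remove \<beta>_def f_def)
    finally have sum_B': "sum \<beta> B' = sum \<beta> B + incr e" .
    have "incr e = real_of_ereal (\<nu> B') - real_of_ereal (\<nu> B)"
      unfolding incr_def B'_def f_def
      using parallel_swap_increment_eq[OF conjunct1[OF base[OF Suc.prems e(1)]] Suc.prems
          conjunct2[OF base[OF Suc.prems e(1)]] e(1) f(2,3)[unfolded f_def]] .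
    moreover obtain r where "\<nu> B = ereal r"
      using valuation_base_ereal[OF Suc.prems] .
    ultimately show ?case
      using IH sum_B' by simp
  qed
  then show ?thesis
    unfolding trivial_valuation_def by blast
qed

end

theorem mainTheorem20:
  fixes E :: "'a set" and \<B> :: "'a set set" and S :: "'a set"
  assumes "matroid E \<B>"
    and "simplification_set E \<B> S"
    and "rigid S (restrict_bases \<B> S)"
  shows "rigid E \<B>"
  unfolding rigid_def
proof (intro allI impI)
  fix \<nu> assume "valuation E \<B> \<nu>"
  then interpret valuated_simplification E \<B> S \<nu>
    using assms(1,2) by unfold_locales
  show "trivial_valuation \<B> \<nu>"
    using assms(3) valuation_restrict trivial_valuation_extend unfolding rigid_def by blast
qed

end
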